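(* Let $R$ be a commutative ring and $I$ an invertible fractional ideal of $R$. If $M_1,\ldots,M_n$ are $R$-submodules of $T(R)$ with $I=\bigcup_{k=1}^n M_k$, then $I=M_k$ for some $k$.
   Context: All rings are commutative with $1\neq 0$. $T(R)$ denotes the total ring of fractions of $R$. A fractional ideal of $R$ is an $R$-submodule $I\subseteq T(R)$ such that $aI\subseteq R$ for some nonzerodivisor $a\in R$; for fractional ideals $I,J$, $IJ$ is the set of finite sums $\sum x_iy_i$ with $x_i\in I$, $y_i\in J$. A fractional ideal $I$ is invertible if $IJ=R$ for some fractional ideal $J$. *)

theory Defs
  imports Main
begin

definition subring_of :: "'a::comm_ring_1 set \<Rightarrow> bool" where
  "subring_of R \<longleftrightarrow> 0 \<in> R \<and> 1 \<in> R \<and> (\<forall>x\<in>R. \<forall>y\<in>R. x + y \<in> R \<and> x - y \<in> R \<and> x * y \<in> R)"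

definition nzd_of :: "'a::comm_ring_1 set \<Rightarrow> 'a \<Rightarrow> bool" where
  "nzd_of R s \<longleftrightarrow> s \<in> R \<and> (\<forall>r\<in>R. s * r = 0 \<longrightarrow> r = 0)"

(* The ambient ring 'a (UNIV) is (a copy of) the total ring of fractions T(R) of R:
   R embeds as a subring, every nonzerodivisor of R is a unit, and every element is r/s
   with s a nonzerodivisor of R. This determines T(R) up to isomorphism over R. *)
definition total_ring_of_fractions :: "'a::comm_ring_1 set \<Rightarrow> bool" where
  "total_ring_of_fractions R \<longleftrightarrow> subring_of R
     \<and> (\<forall>s. nzd_of R s \<longrightarrow> (\<exists>t. s * t = 1))
     \<and> (\<forall>x. \<exists>r\<in>R. \<exists>s. nzd_of R s \<and> x * s = r)"

definition submodule_of :: "'a::comm_ring_1 set \<Rightarrow> 'a set \<Rightarrow> bool" where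
  "submodule_of R M \<longleftrightarrow> 0 \<in> M \<and> (\<forall>x\<in>M. \<forall>y\<in>M. x + y \<in> M) \<and> (\<forall>r\<in>R. \<forall>x\<in>M. r * x \<in> M)"

definition fractional_ideal :: "'a::comm_ring_1 set \<Rightarrow> 'a set \<Rightarrow> bool" where
  "fractional_ideal R I \<longleftrightarrow> submodule_of R I \<and> (\<exists>a. nzd_of R a \<and> (\<forall>x\<in>I. a * x \<in> R))"

definition frac_prod :: "'a::comm_ring_1 set \<Rightarrow> 'a set \<Rightarrow> 'a set" where
  "frac_prod I J = {z. \<exists>n::nat. \<exists>f g. (\<forall>i<n. f i \<in> I \<and> g i \<in> J) \<and> z = (\<Sum>i<n. f i * g i)}"

definition invertible_frac :: "'a::comm_ring_1 set \<Rightarrow> 'a set \<Rightarrow> bool" where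
  "invertible_frac R I \<longleftrightarrow> fractional_ideal R I \<and> (\<exists>J. fractional_ideal R J \<and> frac_prod I J = R)"

end

theory Submission
  imports Defs
begin

text \<open>Choose \<open>J\<close> with \<open>IJ = R\<close>. If \<open>1 \<in> M\<^sub>k J\<close> for some \<open>k\<close>, then every \<open>z \<in> I\<close> satisfies
  \<open>z \<in> z M\<^sub>k J = M\<^sub>k (zJ) \<subseteq> M\<^sub>k\<close>, so \<open>I = M\<^sub>k\<close>. Otherwise each \<open>M\<^sub>k J\<close> is a proper ideal of \<open>R\<close>
  and lies in a maximal ideal \<open>P\<^sub>k\<close>. Since \<open>IJ\<close> lies in no maximal ideal, a Chinese-remainder
  style combination produces \<open>z \<in> I\<close> with \<open>zJ \<not>\<subseteq> P\<^sub>k\<close> for every \<open>k\<close>; but \<open>z\<close> lies in some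
  \<open>M\<^sub>k\<close>, whence \<open>zJ \<subseteq> M\<^sub>k J \<subseteq> P\<^sub>k\<close>.\<close>

definition ideal_of :: "'a::comm_ring_1 set \<Rightarrow> 'a set \<Rightarrow> bool" where
  "ideal_of R P \<longleftrightarrow> P \<subseteq> R \<and> submodule_of R P"

definition maximal_ideal_of :: "'a::comm_ring_1 set \<Rightarrow> 'a set \<Rightarrow> bool" where
  "maximal_ideal_of R P \<longleftrightarrow> ideal_of R P \<and> 1 \<notin> P
     \<and> (\<forall>Q. ideal_of R Q \<and> P \<subseteq> Q \<and> 1 \<notin> Q \<longrightarrow> Q = P)"

lemma subring_imp_submodule: "subring_of R \<Longrightarrow> submodule_of R R"
  unfolding subring_of_def submodule_of_def by blast

lemma submodule_diff:
  assumes "subring_of R" "submodule_of R M" "x \<in> M" "y \<in> M"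
  shows "x - y \<in> M"
proof -
  have "-1 \<in> R" using assms(1) unfolding subring_of_def by (metis diff_0)
  then have "x + (-1) * y \<in> M" using assms(2-4) unfolding submodule_of_def by blast
  then show ?thesis by simp
qed

lemma submodule_sum:
  assumes "submodule_of R M" "\<And>i. i < (n::nat) \<Longrightarrow> h i \<in> M"
  shows "(\<Sum>i<n. h i) \<in> M"
  using assms(2) by (induction n) (use assms(1) in \<open>auto simp: submodule_of_def\<close>)

lemma submodule_Union_chain:
  assumes "C \<noteq> {}" "\<forall>M\<in>C. submodule_of R M" "\<forall>M\<in>C. \<forall>N\<in>C. M \<subseteq> N \<or> N \<subseteq> M"
  shows "submodule_of R (\<Union>C)"
  unfolding submodule_of_def
proof (intro conjI ballI)
  show "0 \<in> \<Union>C" using assms(1,2) unfolding submodule_of_def by blast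
next
  fix x y assume "x \<in> \<Union>C" "y \<in> \<Union>C"
  then obtain M N where "M \<in> C" "N \<in> C" "x \<in> M" "y \<in> N" by blast
  with assms(2,3) show "x + y \<in> \<Union>C" unfolding submodule_of_def by (metis UnionI subsetD)
next
  fix r x assume "r \<in> R" "x \<in> \<Union>C"
  with assms(2) show "r * x \<in> \<Union>C" unfolding submodule_of_def by blast
qed

lemma ideal_mult_right: "ideal_of R P \<Longrightarrow> x \<in> P \<Longrightarrow> r \<in> R \<Longrightarrow> x * r \<in> P"
  unfolding ideal_of_def submodule_of_def by (metis mult.commute)

lemma ideal_add_multiples:
  assumes "subring_of R" "ideal_of R P" "e \<in> R"
  shows "ideal_of R {p + r * e |p r. p \<in> P \<and> r \<in> R}" (is "ideal_of R ?Q")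
  unfolding ideal_of_def submodule_of_def
proof (intro conjI ballI subsetI)
  fix x assume "x \<in> ?Q"
  with assms show "x \<in> R" unfolding subring_of_def ideal_of_def by blast
next
  show "0 \<in> ?Q" using assms unfolding subring_of_def ideal_of_def submodule_of_def
    by (metis (mono_tags, lifting) add_0 mem_Collect_eq mult_zero_left)
next
  fix x y assume "x \<in> ?Q" "y \<in> ?Q"
  then obtain p r q s where "x = p + r * e" "y = q + s * e" "p \<in> P" "q \<in> P" "r \<in> R" "s \<in> R"
    by blast
  moreover have "x + y = (p + q) + (r + s) * e" using calculation by (simp add: algebra_simps)
  ultimately show "x + y \<in> ?Q"
    using assms unfolding subring_of_def ideal_of_def submodule_of_def by blast
next
  fix t x assume "t \<in> R" "x \<in> ?Q"
  then obtain p r where "x = p + r * e" "p \<in> P" "r \<in> R" by blast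
  moreover have "t * x = t * p + (t * r) * e" using calculation by (simp add: algebra_simps)
  ultimately show "t * x \<in> ?Q"
    using \<open>t \<in> R\<close> assms unfolding subring_of_def ideal_of_def submodule_of_def by blast
qed

lemma ideal_add_nonmem:
  assumes "subring_of R" "ideal_of R P" "a \<notin> P" "b \<in> P"
  shows "a + b \<notin> P"
proof
  assume "a + b \<in> P"
  then have "(a + b) - b \<in> P"
    using submodule_diff[OF assms(1)] assms(2,4) unfolding ideal_of_def by blast
  then show False using assms(3) by simp
qed

lemma maximal_ideal_exists:
  assumes "ideal_of R A" "1 \<notin> A"
  shows "\<exists>P. maximal_ideal_of R P \<and> A \<subseteq> P"
proof -
  define \<S> where "\<S> = {Q. ideal_of R Q \<and> A \<subseteq> Q \<and> 1 \<notin> Q}"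
  have "\<exists>P\<in>\<S>. \<forall>Q\<in>\<S>. P \<subseteq> Q \<longrightarrow> Q = P"
  proof (rule subset_Zorn_nonempty)
    show "\<S> \<noteq> {}" using assms unfolding \<S>_def by blast
  next
    fix C assume "C \<noteq> {}" "subset.chain \<S> C"
    then have "C \<subseteq> \<S>" "\<forall>M\<in>C. \<forall>N\<in>C. M \<subseteq> N \<or> N \<subseteq> M" unfolding subset.chain_def by auto
    with \<open>C \<noteq> {}\<close> have "submodule_of R (\<Union>C)"
      by (intro submodule_Union_chain) (auto simp: \<S>_def ideal_of_def)
    with \<open>C \<subseteq> \<S>\<close> \<open>C \<noteq> {}\<close> show "\<Union>C \<in> \<S>" unfolding \<S>_def ideal_of_def by blast
  qed
  then obtain P where "P \<in> \<S>" "\<forall>Q\<in>\<S>. P \<subseteq> Q \<longrightarrow> Q = P" by blast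
  then show ?thesis unfolding \<S>_def maximal_ideal_of_def by blast
qed

lemma maximal_ideal_inverse_mod:
  assumes S: "subring_of R" and P: "maximal_ideal_of R P" and e: "e \<in> R" "e \<notin> P"
  shows "\<exists>r\<in>R. r * e - 1 \<in> P"
proof -
  define Q where "Q = {p + r * e |p r. p \<in> P \<and> r \<in> R}"
  have IP: "ideal_of R P" using P unfolding maximal_ideal_of_def by blast
  have R01: "0 \<in> R" "1 \<in> R" using S unfolding subring_of_def by auto
  have "ideal_of R Q" unfolding Q_def using ideal_add_multiples[OF S IP e(1)] .
  moreover have "P \<subseteq> Q" unfolding Q_def using R01(1) by force
  moreover have "e \<in> Q" unfolding Q_def using IP R01(2)
    unfolding ideal_of_def submodule_of_def by force
  ultimately have "1 \<in> Q" using P e(2) unfolding maximal_ideal_of_def by blast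
  then obtain p r where pr: "1 = p + r * e" "p \<in> P" "r \<in> R" unfolding Q_def by blast
  have "0 - p \<in> P" using submodule_diff[OF S _ _ pr(2)] IP
    unfolding ideal_of_def submodule_of_def by blast
  moreover have "r * e - 1 = 0 - p" using pr(1) by (simp add: algebra_simps)
  ultimately show ?thesis using pr(3) by metis
qed

lemma maximal_ideal_prime:
  assumes S: "subring_of R" and P: "maximal_ideal_of R P"
    and a: "a \<in> R" "a \<notin> P" and b: "b \<in> R" "b \<notin> P"
  shows "a * b \<notin> P"
proof
  assume ab: "a * b \<in> P"
  have IP: "ideal_of R P" using P unfolding maximal_ideal_of_def by blast
  obtain r where r: "r \<in> R" "r * a - 1 \<in> P" using maximal_ideal_inverse_mod[OF S P a] by blast
  obtain s where s: "s \<in> R" "s * b - 1 \<in> P" using maximal_ideal_inverse_mod[OF S P b] by blast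
  have "(r * s) * (a * b) \<in> P" "(r * a - 1) * (s * b) \<in> P"
    using IP ab r s b ideal_mult_right[OF IP r(2), of "s * b"] S
    unfolding ideal_of_def submodule_of_def subring_of_def by blast+
  then have "(r * s) * (a * b) - (r * a - 1) * (s * b) - (s * b - 1) \<in> P"
    using submodule_diff[OF S] IP s(2) unfolding ideal_of_def by blast
  moreover have "(r * s) * (a * b) - (r * a - 1) * (s * b) - (s * b - 1) = 1"
    by (simp add: algebra_simps)
  ultimately show False using P unfolding maximal_ideal_of_def by simp
qed

lemma maximal_ideals_separate:
  assumes S: "subring_of R" and "finite K" and Q: "maximal_ideal_of R Q"
    and "\<forall>k\<in>K. maximal_ideal_of R (P k) \<and> P k \<noteq> Q"
  shows "\<exists>c\<in>R. (\<forall>k\<in>K. c \<in> P k) \<and> c \<notin> Q"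
  using assms(2,4)
proof (induction K rule: finite_induct)
  case empty
  have "1 \<in> R" "1 \<notin> Q" using S Q unfolding subring_of_def maximal_ideal_of_def by auto
  then show ?case by blast
next
  case (insert k K)
  then obtain c where c: "c \<in> R" "\<forall>j\<in>K. c \<in> P j" "c \<notin> Q" by auto
  have Pk: "maximal_ideal_of R (P k)" "P k \<noteq> Q" using insert.prems by auto
  obtain a where a: "a \<in> P k" "a \<notin> Q" using Pk Q unfolding maximal_ideal_of_def by blast
  have aR: "a \<in> R" using a(1) Pk(1) unfolding maximal_ideal_of_def ideal_of_def by blast
  have "c * a \<in> R" using S c(1) aR unfolding subring_of_def by blast
  moreover have "\<forall>j\<in>insert k K. c * a \<in> P j"
  proof
    fix j assume "j \<in> insert k K"
    then show "c * a \<in> P j"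
    proof
      assume "j = k"
      then show ?thesis using a(1) c(1) Pk(1)
        unfolding maximal_ideal_of_def ideal_of_def submodule_of_def by blast
    next
      assume "j \<in> K"
      then have "ideal_of R (P j)" using insert.prems unfolding maximal_ideal_of_def by blast
      then show ?thesis using ideal_mult_right c(2) aR \<open>j \<in> K\<close> by blast
    qed
  qed
  moreover have "c * a \<notin> Q" using maximal_ideal_prime[OF S Q c(1,3) aR a(2)] .
  ultimately show ?case by blast
qed

lemma frac_prod_mult_mem: "x \<in> I \<Longrightarrow> y \<in> J \<Longrightarrow> x * y \<in> frac_prod I J"
  unfolding frac_prod_def by (intro CollectI exI[of _ 1] exI[of _ "\<lambda>_. x"] exI[of _ "\<lambda>_. y"]) simp

lemma frac_prod_subset:
  assumes "submodule_of R A" "\<And>x y. x \<in> I \<Longrightarrow> y \<in> J \<Longrightarrow> x * y \<in> A"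
  shows "frac_prod I J \<subseteq> A"
proof
  fix z assume "z \<in> frac_prod I J"
  then obtain n f g where "\<forall>i<(n::nat). f i \<in> I \<and> g i \<in> J" "z = (\<Sum>i<n. f i * g i)"
    unfolding frac_prod_def by auto
  then show "z \<in> A" using submodule_sum[OF assms(1)] assms(2) by simp
qed

lemma submodule_frac_prod:
  assumes I: "submodule_of R I"
  shows "submodule_of R (frac_prod I J)"
  unfolding submodule_of_def
proof (intro conjI ballI)
  show "0 \<in> frac_prod I J" unfolding frac_prod_def by (intro CollectI exI[of _ 0]) simp
next
  fix a b assume "a \<in> frac_prod I J" "b \<in> frac_prod I J"
  then obtain m f g n f' g' where
    fg: "\<forall>i<(m::nat). f i \<in> I \<and> g i \<in> J" "a = (\<Sum>i<m. f i * g i)" and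
    fg': "\<forall>i<(n::nat). f' i \<in> I \<and> g' i \<in> J" "b = (\<Sum>i<n. f' i * g' i)"
    unfolding frac_prod_def by auto
  define F where "F i = (if i < m then f i else f' (i - m))" for i
  define G where "G i = (if i < m then g i else g' (i - m))" for i
  have "(\<Sum>i<m + n. F i * G i) = (\<Sum>i<m. F i * G i) + (\<Sum>i<n. F (m + i) * G (m + i))"
    by (induction n) (simp_all add: add.assoc)
  also have "\<dots> = a + b" unfolding fg fg' F_def G_def by simp
  finally have "a + b = (\<Sum>i<m + n. F i * G i)" ..
  moreover have "\<forall>i<m + n. F i \<in> I \<and> G i \<in> J"
    using fg(1) fg'(1) unfolding F_def G_def by auto
  ultimately show "a + b \<in> frac_prod I J" unfolding frac_prod_def by blast
next
  fix r a assume "r \<in> R" "a \<in> frac_prod I J"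
  then obtain n f g where fg: "\<forall>i<(n::nat). f i \<in> I \<and> g i \<in> J" "a = (\<Sum>i<n. f i * g i)"
    unfolding frac_prod_def by auto
  have "r * a = (\<Sum>i<n. (r * f i) * g i)" unfolding fg by (simp add: sum_distrib_left mult.assoc)
  moreover have "\<forall>i<n. r * f i \<in> I \<and> g i \<in> J" using fg(1) I \<open>r \<in> R\<close> unfolding submodule_of_def by blast
  ultimately show "r * a \<in> frac_prod I J" unfolding frac_prod_def
    by (intro CollectI exI[of _ n] exI[of _ "\<lambda>i. r * f i"] exI[of _ g]) auto
qed

lemma mem_of_one_mem_frac_prod:
  assumes M: "submodule_of R M" and one: "1 \<in> frac_prod M J" and z: "\<forall>y\<in>J. z * y \<in> R"
  shows "z \<in> M"
proof -
  obtain n f g where fg: "\<forall>i<(n::nat). f i \<in> M \<and> g i \<in> J" "1 = (\<Sum>i<n. f i * g i)"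
    using one unfolding frac_prod_def by auto
  have "z = z * (\<Sum>i<n. f i * g i)" using fg(2) by simp
  also have "\<dots> = (\<Sum>i<n. (z * g i) * f i)" by (simp add: sum_distrib_left algebra_simps)
  also have "\<dots> \<in> M"
  proof (rule submodule_sum[OF M])
    fix i assume "i < n"
    then show "(z * g i) * f i \<in> M" using M fg(1) z unfolding submodule_of_def by blast
  qed
  finally show ?thesis .
qed

lemma one_mem_frac_prod_not_subset:
  assumes "ideal_of R P" "1 \<notin> P" "1 \<in> frac_prod I J"
  shows "\<exists>w\<in>I. \<exists>y\<in>J. w * y \<notin> P"
proof (rule ccontr)
  assume "\<not> ?thesis"
  then have "frac_prod I J \<subseteq> P"
    using frac_prod_subset[of R P I J] assms(1) unfolding ideal_of_def by blast
  then show False using assms(2,3) by blast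
qed

lemma avoid_maximal_ideals:
  assumes S: "subring_of R" and I: "submodule_of R I" and IJ: "\<forall>x\<in>I. \<forall>y\<in>J. x * y \<in> R"
    and one: "1 \<in> frac_prod I J" and "finite K" and "\<forall>k\<in>K. maximal_ideal_of R (P k)"
  shows "\<exists>z\<in>I. \<forall>k\<in>K. \<exists>y\<in>J. z * y \<notin> P k"
  using assms(5,6)
proof (induction K rule: finite_induct)
  case empty
  then show ?case using I unfolding submodule_of_def by blast
next
  case (insert k K)
  then obtain z where z: "z \<in> I" "\<forall>j\<in>K. \<exists>y\<in>J. z * y \<notin> P j" by auto
  have Pk: "maximal_ideal_of R (P k)" using insert.prems by simp
  then have IPk: "ideal_of R (P k)" unfolding maximal_ideal_of_def by blast
  show ?case
  proof (cases "(\<exists>y\<in>J. z * y \<notin> P k) \<or> (\<exists>j\<in>K. P j = P k)")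
    case True
    with z have "\<forall>j\<in>insert k K. \<exists>y\<in>J. z * y \<notin> P j" by auto
    then show ?thesis using z(1) by blast
  next
    case False
    then have zJ: "\<forall>y\<in>J. z * y \<in> P k" and "\<forall>j\<in>K. maximal_ideal_of R (P j) \<and> P j \<noteq> P k"
      using insert.prems by auto
    then obtain c where c: "c \<in> R" "\<forall>j\<in>K. c \<in> P j" "c \<notin> P k"
      using maximal_ideals_separate[OF S \<open>finite K\<close> Pk] by blast
    obtain w y0 where w: "w \<in> I" "y0 \<in> J" "w * y0 \<notin> P k"
      using one_mem_frac_prod_not_subset[OF IPk _ one] Pk unfolding maximal_ideal_of_def by blast
    have "z + c * w \<in> I" using I z(1) w(1) c(1) unfolding submodule_of_def by blast
    moreover have "\<exists>y\<in>J. (z + c * w) * y \<notin> P j" if "j \<in> K" for j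
    proof -
      obtain y where y: "y \<in> J" "z * y \<notin> P j" using z(2) \<open>j \<in> K\<close> by blast
      have IPj: "ideal_of R (P j)" using insert.prems \<open>j \<in> K\<close> unfolding maximal_ideal_of_def by blast
      have "c * (w * y) \<in> P j" using ideal_mult_right[OF IPj] c(2) IJ w(1) y(1) \<open>j \<in> K\<close> by blast
      then have "z * y + c * (w * y) \<notin> P j" using ideal_add_nonmem[OF S IPj y(2)] by blast
      moreover have "(z + c * w) * y = z * y + c * (w * y)" by (simp add: algebra_simps)
      ultimately show ?thesis using y(1) by metis
    qed
    moreover have "(z + c * w) * y0 \<notin> P k"
    proof -
      have "c * (w * y0) \<notin> P k" using maximal_ideal_prime[OF S Pk c(1,3)] IJ w by blast
      then have "c * (w * y0) + z * y0 \<notin> P k" using ideal_add_nonmem[OF S IPk] zJ w(2) by blast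
      moreover have "(z + c * w) * y0 = c * (w * y0) + z * y0" by (simp add: algebra_simps)
      ultimately show ?thesis by simp
    qed
    ultimately show ?thesis using w(2) by blast
  qed
qed

lemma one_mem_frac_prod_of_cover:
  assumes S: "subring_of R" and I: "submodule_of R I" and IJ: "\<forall>x\<in>I. \<forall>y\<in>J. x * y \<in> R"
    and one: "1 \<in> frac_prod I J" and "finite K"
    and M: "\<forall>k\<in>K. submodule_of R (M k)" and cover: "I = (\<Union>k\<in>K. M k)"
  shows "\<exists>k\<in>K. 1 \<in> frac_prod (M k) J"
proof (rule ccontr)
  assume none: "\<not> ?thesis"
  have "\<exists>P. maximal_ideal_of R P \<and> frac_prod (M k) J \<subseteq> P" if "k \<in> K" for k
  proof (rule maximal_ideal_exists)
    have "frac_prod (M k) J \<subseteq> R"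
      using frac_prod_subset[OF subring_imp_submodule[OF S]] IJ cover that by blast
    then show "ideal_of R (frac_prod (M k) J)"
      unfolding ideal_of_def using submodule_frac_prod M that by blast
    show "1 \<notin> frac_prod (M k) J" using none that by blast
  qed
  then obtain P where P: "\<forall>k\<in>K. maximal_ideal_of R (P k) \<and> frac_prod (M k) J \<subseteq> P k"
    by metis
  then obtain z where "z \<in> I" and z: "\<forall>k\<in>K. \<exists>y\<in>J. z * y \<notin> P k"
    using avoid_maximal_ideals[OF S I IJ one \<open>finite K\<close>] by blast
  then obtain k where "k \<in> K" "z \<in> M k" using cover by blast
  then obtain y where "y \<in> J" "z * y \<notin> P k" using z by blast
  then show False using frac_prod_mult_mem[OF \<open>z \<in> M k\<close>] P \<open>k \<in> K\<close> by blast
qed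

theorem corollary3p2:
  fixes R :: "'a::comm_ring_1 set" and I :: "'a set" and M :: "nat \<Rightarrow> 'a set" and n :: nat
  assumes "total_ring_of_fractions R"
    and "invertible_frac R I"
    and "\<forall>k\<in>{1..n}. submodule_of R (M k)"
    and "I = (\<Union>k\<in>{1..n}. M k)"
  shows "\<exists>k\<in>{1..n}. I = M k"
proof -
  have S: "subring_of R" using assms(1) unfolding total_ring_of_fractions_def by blast
  have I: "submodule_of R I" using assms(2) unfolding invertible_frac_def fractional_ideal_def by blast
  obtain J where J: "frac_prod I J = R" using assms(2) unfolding invertible_frac_def by blast
  have IJ: "\<forall>x\<in>I. \<forall>y\<in>J. x * y \<in> R" using frac_prod_mult_mem J by blast
  have "1 \<in> frac_prod I J" using S J unfolding subring_of_def by blast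
  then obtain k where k: "k \<in> {1..n}" "1 \<in> frac_prod (M k) J"
    using one_mem_frac_prod_of_cover[OF S I IJ _ _ assms(3,4)] by blast
  have "I \<subseteq> M k" using mem_of_one_mem_frac_prod[OF _ k(2)] assms(3) k(1) IJ by blast
  moreover have "M k \<subseteq> I" using assms(4) k(1) by blast
  ultimately show ?thesis using k(1) by blast
qed

end
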